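(* Let $\mathbf{a}\in\mathbb{Z}_{>0}^n$ and let $\epsilon,\delta$ satisfy $0<\epsilon<\delta<\dfrac{0.1}{n\,2^n\|\mathbf{a}\|_1}$. Then $$\left[\frac{(n-1)!}{\epsilon}\,\mathrm{Vol}\Big(\big(C(\delta\mathbf{a},1)\cap C(\mathbf{0},1+\epsilon)\big)\setminus C(\mathbf{0},1)\Big)\right]=\big|\{\boldsymbol\sigma\in\{-1,1\}^n:\langle\boldsymbol\sigma,\mathbf{a}\rangle>0\}\big|,$$ where $[x]$ denotes the integer nearest to $x$.
   Context: For $\mathbf{c}\in\mathbb{R}^n$, $r\ge 0$, $C(\mathbf{c},r)=\{\mathbf{x}\in\mathbb{R}^n:\|\mathbf{x}-\mathbf{c}\|_1\le r\}$. $\langle\mathbf{u},\mathbf{v}\rangle=\sum_iu_iv_i$. *)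

theory Defs
  imports "HOL-Analysis.Analysis"
begin

definition l1ball :: "real^'n \<Rightarrow> real \<Rightarrow> (real^'n) set" where
  "l1ball c r = {x. (\<Sum>i\<in>UNIV. \<bar>x $ i - c $ i\<bar>) \<le> r}"

end

theory Submission
  imports Defs
begin

text \<open>
  Split the region \<open>S = (C(\<delta>a,1) \<inter> C(0,1+\<epsilon>)) - C(0,1)\<close> by the sign pattern \<open>\<sigma>\<close> of its points.
  On the orthant of \<open>\<sigma>\<close> one has \<open>\<parallel>x - \<delta>a\<parallel>\<^sub>1 \<ge> \<parallel>x\<parallel>\<^sub>1 - \<delta>\<langle>\<sigma>,a\<rangle>\<close>, with equality once \<open>\<sigma>\<^sub>i x\<^sub>i \<ge> \<delta>a\<^sub>i\<close>
  for all \<open>i\<close>. Hence only orthants with \<open>\<langle>\<sigma>,a\<rangle> > 0\<close> meet \<open>S\<close>, each such piece lies in the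
  reflected simplex slab \<open>1 < \<parallel>x\<parallel>\<^sub>1 \<le> 1+\<epsilon>\<close> of volume \<open>((1+\<epsilon>)\<^sup>n - 1)/n!\<close>, and, because
  \<open>\<langle>\<sigma>,a\<rangle> \<ge> 1\<close> for integral \<open>a\<close>, it contains a reflected and translated slab of volume
  \<open>((b+\<epsilon>)\<^sup>n - b\<^sup>n)/n!\<close> with \<open>b = 1 - \<delta>\<parallel>a\<parallel>\<^sub>1\<close>; these are pairwise disjoint. Both volumes equal
  \<open>\<epsilon>/(n-1)!\<close> up to a relative error \<open>O(n\<delta>\<parallel>a\<parallel>\<^sub>1)\<close>, and as there are at most \<open>2\<^sup>n\<close> orthants the
  total error after scaling by \<open>(n-1)!/\<epsilon>\<close> stays below \<open>1/2\<close>.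
\<close>

lemma emeasure_scaled_std_simplex:
  assumes "0 \<le> t"
  shows "emeasure lborel {x::'a::euclidean_space. (\<forall>i\<in>Basis. 0 \<le> x \<bullet> i) \<and> sum ((\<bullet>) x) Basis \<le> t} =
           ennreal (t ^ DIM('a) / fact DIM('a))"
proof -
  have "emeasure lborel {x::'a. (\<forall>i\<in>Basis. 0 \<le> x \<bullet> i) \<and> sum ((\<bullet>) x) Basis \<le> t} =
          emeasure (distr (Pi\<^sub>M Basis (\<lambda>b. lborel)) borel (\<lambda>f. \<Sum>b\<in>Basis. f b *\<^sub>R b))
            {x::'a. (\<forall>i\<in>Basis. 0 \<le> x \<bullet> i) \<and> sum ((\<bullet>) x) Basis \<le> t}"
    by (subst lborel_eq) simp
  also have "\<dots> = emeasure (Pi\<^sub>M Basis (\<lambda>b. lborel))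
                    ({y::'a \<Rightarrow> real. (\<forall>i\<in>Basis. 0 \<le> y i) \<and> sum y Basis \<le> t} \<inter>
                      space (Pi\<^sub>M Basis (\<lambda>b. lborel)))"
    by (subst emeasure_distr) auto
  also have "\<dots> = ennreal (t ^ DIM('a) / fact DIM('a))"
    using assms by (subst emeasure_std_simplex_aux) auto
  finally show ?thesis .
qed

definition corner_simplex :: "real \<Rightarrow> (real^'n) set" where
  "corner_simplex t = {y. (\<forall>i. 0 \<le> y $ i) \<and> (\<Sum>i\<in>UNIV. y $ i) \<le> t}"

lemma closed_corner_simplex: "closed (corner_simplex t)"
proof -
  have "corner_simplex t = (\<Inter>i. {y. 0 \<le> y $ i}) \<inter> {y. (\<Sum>i\<in>UNIV. y $ i) \<le> t}"
    by (auto simp: corner_simplex_def)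
  moreover have "closed {y::real^'n. 0 \<le> y $ i}" for i
    by (intro closed_Collect_le continuous_intros)
  moreover have "closed {y::real^'n. (\<Sum>i\<in>UNIV. y $ i) \<le> t}"
    by (intro closed_Collect_le continuous_intros)
  ultimately show ?thesis
    by (metis closed_INT closed_Int)
qed

lemma emeasure_corner_simplex:
  assumes "0 \<le> t"
  shows "emeasure lborel (corner_simplex t :: (real^'n) set) = ennreal (t ^ CARD('n) / fact CARD('n))"
proof -
  have Basis_eq: "(Basis :: (real^'n) set) = range (\<lambda>i. axis i 1)"
    by (auto simp: Basis_vec_def)
  have Basis_sum: "(\<Sum>b\<in>Basis. x \<bullet> b) = (\<Sum>i\<in>UNIV. x $ i)" for x :: "real^'n"
    unfolding Basis_eq by (subst sum.reindex) (auto simp: inj_on_def axis_eq_axis inner_axis)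
  have "corner_simplex t = {x::real^'n. (\<forall>i\<in>Basis. 0 \<le> x \<bullet> i) \<and> sum ((\<bullet>) x) Basis \<le> t}"
    by (simp add: corner_simplex_def Basis_sum) (auto simp: Basis_eq inner_axis)
  then show ?thesis
    using emeasure_scaled_std_simplex[OF assms, where 'a="real^'n"] by simp
qed

definition simplex_shell :: "real \<Rightarrow> real \<Rightarrow> (real^'n) set" where
  "simplex_shell r1 r2 = corner_simplex r2 - corner_simplex r1"

lemma mem_simplex_shell:
  "y \<in> simplex_shell r1 r2 \<longleftrightarrow> (\<forall>i. 0 \<le> y $ i) \<and> r1 < (\<Sum>i\<in>UNIV. y $ i) \<and> (\<Sum>i\<in>UNIV. y $ i) \<le> r2"
  by (auto simp: simplex_shell_def corner_simplex_def)

lemma simplex_shell_sets: "simplex_shell r1 r2 \<in> sets borel"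
  unfolding simplex_shell_def using closed_corner_simplex by (intro sets.Diff borel_closed)

lemma fmeasurable_simplex_shell:
  assumes "0 \<le> r2"
  shows "simplex_shell r1 r2 \<in> fmeasurable lborel"
proof -
  have "corner_simplex r2 \<in> fmeasurable lborel"
    using closed_corner_simplex
    by (intro fmeasurableI) (auto intro: borel_closed simp: emeasure_corner_simplex[OF assms])
  then show ?thesis
    by (rule fmeasurableI2[OF _ _ simplex_shell_sets[folded sets_lborel]]) (auto simp: simplex_shell_def)
qed

lemma measure_simplex_shell:
  assumes "0 \<le> r1" "r1 \<le> r2"
  shows "measure lborel (simplex_shell r1 r2 :: (real^'n) set) =
           (r2 ^ CARD('n) - r1 ^ CARD('n)) / fact CARD('n)"
proof -
  have simplex: "measure lborel (corner_simplex r :: (real^'n) set) = r ^ CARD('n) / fact CARD('n)"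
    if "0 \<le> r" for r
    using emeasure_corner_simplex[OF that, where 'n='n] that by (simp add: measure_def)
  have "corner_simplex r1 \<subseteq> (corner_simplex r2 :: (real^'n) set)"
    using assms(2) by (auto simp: corner_simplex_def)
  then have "measure lborel (simplex_shell r1 r2 :: (real^'n) set) =
               measure lborel (corner_simplex r2 :: (real^'n) set) - measure lborel (corner_simplex r1 :: (real^'n) set)"
    unfolding simplex_shell_def using assms closed_corner_simplex
    by (intro measure_Diff) (auto simp: emeasure_corner_simplex intro: borel_closed)
  then show ?thesis
    using assms simplex by (simp add: diff_divide_distrib)
qed

lemma closed_l1ball: "closed (l1ball c r)"
  unfolding l1ball_def by (intro closed_Collect_le continuous_intros)

definition sign_shift :: "real^'n \<Rightarrow> real^'n \<Rightarrow> real^'n \<Rightarrow> real^'n" where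
  "sign_shift s t x = (\<chi> i. s $ i * x $ i + t $ i)"

lemma sign_shift_measurable [measurable]: "sign_shift s t \<in> borel \<rightarrow>\<^sub>M borel"
  unfolding sign_shift_def
  by (intro borel_measurable_continuous_onI continuous_intros continuous_on_vec_lambda)

lemma distr_lborel_sign_shift:
  fixes s t :: "real^'n"
  assumes "\<And>i. \<bar>s $ i\<bar> = 1"
  shows "distr lborel borel (sign_shift s t) = lborel"
proof -
  define c where "c j = s \<bullet> j" for j :: "real^'n"
  have c: "\<bar>c j\<bar> = 1" if "j \<in> Basis" for j
    using assms that by (auto simp: c_def Basis_vec_def inner_axis)
  have "sign_shift s t x = t + (\<Sum>j\<in>Basis. (c j * (x \<bullet> j)) *\<^sub>R j)" for x
  proof -
    have "(\<Sum>j\<in>Basis. (c j * (x \<bullet> j)) *\<^sub>R j) = (\<Sum>j\<in>Basis. ((\<chi> i. s $ i * x $ i) \<bullet> j) *\<^sub>R j)"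
      by (intro sum.cong) (auto simp: c_def Basis_vec_def inner_axis)
    then show ?thesis
      by (simp add: euclidean_representation sign_shift_def vec_eq_iff)
  qed
  then have "sign_shift s t = (\<lambda>x. t + (\<Sum>j\<in>Basis. (c j * (x \<bullet> j)) *\<^sub>R j))"
    by blast
  moreover have "lborel = density (distr lborel borel \<dots>) (\<lambda>_. \<Prod>j\<in>Basis. \<bar>c j\<bar>)"
    using c by (intro lborel_affine_euclidean) fastforce
  ultimately show ?thesis
    using c by (simp add: density_1)
qed

lemma measure_sign_shift_vimage:
  fixes s t :: "real^'n"
  assumes "\<And>i. \<bar>s $ i\<bar> = 1" and A: "A \<in> fmeasurable lborel"
  shows "sign_shift s t -` A \<in> fmeasurable lborel"
    and "measure lborel (sign_shift s t -` A) = measure lborel A"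
proof -
  have A_sets: "A \<in> sets borel"
    using A by auto
  have "emeasure lborel (sign_shift s t -` A) = emeasure lborel A"
    using A_sets by (subst distr_lborel_sign_shift[OF assms(1), symmetric]) (simp add: emeasure_distr)
  moreover have "sign_shift s t -` A \<in> sets lborel"
    using measurable_sets[OF sign_shift_measurable A_sets] by simp
  ultimately show "sign_shift s t -` A \<in> fmeasurable lborel"
    and "measure lborel (sign_shift s t -` A) = measure lborel A"
    using A by (auto simp: fmeasurable_def measure_def)
qed

definition sign_vectors :: "(int^'n) set" where
  "sign_vectors = {\<sigma>. \<forall>i. \<sigma> $ i \<in> {-1, 1}}"

definition positive_signs :: "int^'n \<Rightarrow> (int^'n) set" where
  "positive_signs a = {\<sigma>. (\<forall>i. \<sigma> $ i \<in> {-1, 1}) \<and> (\<Sum>i\<in>UNIV. \<sigma> $ i * a $ i) > 0}"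

definition of_int_vec :: "int^'n \<Rightarrow> real^'n" where
  "of_int_vec \<sigma> = (\<chi> i. real_of_int (\<sigma> $ i))"

lemma sign_vectors_eq_image_PiE: "sign_vectors = vec_lambda ` (UNIV \<rightarrow>\<^sub>E {-1, 1})"
proof
  show "sign_vectors \<subseteq> vec_lambda ` (UNIV \<rightarrow>\<^sub>E {-1, 1})"
  proof
    fix \<sigma> :: "int^'n"
    assume "\<sigma> \<in> sign_vectors"
    then have "vec_nth \<sigma> \<in> UNIV \<rightarrow>\<^sub>E {-1, 1}"
      by (auto simp: sign_vectors_def)
    then show "\<sigma> \<in> vec_lambda ` (UNIV \<rightarrow>\<^sub>E {-1, 1})"
      by (metis image_eqI vec_nth_inverse)
  qed
qed (auto simp: sign_vectors_def)

lemma finite_sign_vectors: "finite (sign_vectors :: (int^'n) set)"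
  and card_sign_vectors_le: "card (sign_vectors :: (int^'n) set) \<le> 2 ^ CARD('n)"
proof -
  have "finite (UNIV \<rightarrow>\<^sub>E {-1, 1::int} :: ('n \<Rightarrow> int) set)"
    by (simp add: finite_PiE)
  then show "finite (sign_vectors :: (int^'n) set)"
    by (simp add: sign_vectors_eq_image_PiE)
  have "card (sign_vectors :: (int^'n) set) \<le> card (UNIV \<rightarrow>\<^sub>E {-1, 1::int} :: ('n \<Rightarrow> int) set)"
    unfolding sign_vectors_eq_image_PiE by (rule card_image_le) (simp add: finite_PiE)
  then show "card (sign_vectors :: (int^'n) set) \<le> 2 ^ CARD('n)"
    by (simp add: card_PiE numeral_2_eq_2)
qed

lemma positive_signs_subset: "positive_signs a \<subseteq> sign_vectors"
  by (auto simp: positive_signs_def sign_vectors_def)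

lemma card_positive_signs_le: "card (positive_signs (a :: int^'n)) \<le> 2 ^ CARD('n)"
  using card_mono[OF finite_sign_vectors positive_signs_subset[of a]] card_sign_vectors_le[where 'n='n]
  by linarith

lemma of_int_vec_sign:
  assumes "\<sigma> \<in> sign_vectors"
  shows "of_int_vec \<sigma> $ i = 1 \<or> of_int_vec \<sigma> $ i = -1"
proof -
  have "\<sigma> $ i = 1 \<or> \<sigma> $ i = -1"
    using assms by (auto simp: sign_vectors_def)
  then show ?thesis
    by (auto simp: of_int_vec_def)
qed

lemma abs_of_int_vec_sign: "\<sigma> \<in> sign_vectors \<Longrightarrow> \<bar>of_int_vec \<sigma> $ i\<bar> = 1"
  using of_int_vec_sign[of \<sigma> i] by auto

lemma l1_shell_subset_orthant_shells:
  fixes a :: "int^'n"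
  assumes "0 \<le> \<delta>"
  shows "l1ball (\<chi> i. \<delta> * real_of_int (a $ i)) 1 \<inter> l1ball 0 (1 + \<epsilon>) - l1ball 0 1
           \<subseteq> (\<Union>\<sigma>\<in>positive_signs a. sign_shift (of_int_vec \<sigma>) 0 -` simplex_shell 1 (1 + \<epsilon>))"
proof
  fix x :: "real^'n"
  assume x: "x \<in> l1ball (\<chi> i. \<delta> * real_of_int (a $ i)) 1 \<inter> l1ball 0 (1 + \<epsilon>) - l1ball 0 1"
  define \<sigma> :: "int^'n" where "\<sigma> = (\<chi> i. if 0 \<le> x $ i then 1 else -1)"
  define s where "s = of_int_vec \<sigma>"
  have s_x: "s $ i * x $ i = \<bar>x $ i\<bar>" for i
    by (auto simp: s_def of_int_vec_def \<sigma>_def)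
  have x_norms: "(\<Sum>i\<in>UNIV. \<bar>x $ i\<bar>) \<le> 1 + \<epsilon>" "1 < (\<Sum>i\<in>UNIV. \<bar>x $ i\<bar>)"
      "(\<Sum>i\<in>UNIV. \<bar>x $ i - \<delta> * real_of_int (a $ i)\<bar>) \<le> 1"
    using x by (auto simp: l1ball_def)
  have "(\<Sum>i\<in>UNIV. \<bar>x $ i\<bar>) - \<delta> * (\<Sum>i\<in>UNIV. s $ i * real_of_int (a $ i))
          = (\<Sum>i\<in>UNIV. s $ i * (x $ i - \<delta> * real_of_int (a $ i)))"
    by (simp add: sum_subtractf sum_distrib_left algebra_simps s_x[symmetric])
  also have "\<dots> \<le> (\<Sum>i\<in>UNIV. \<bar>x $ i - \<delta> * real_of_int (a $ i)\<bar>)"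
    by (intro sum_mono) (auto simp: s_def of_int_vec_def \<sigma>_def)
  finally have "0 < \<delta> * (\<Sum>i\<in>UNIV. s $ i * real_of_int (a $ i))"
    using x_norms by linarith
  then have "0 < (\<Sum>i\<in>UNIV. \<sigma> $ i * a $ i)"
    using assms by (simp add: s_def of_int_vec_def zero_less_mult_iff flip: of_int_sum of_int_mult)
  then have "\<sigma> \<in> positive_signs a"
    by (auto simp: positive_signs_def \<sigma>_def)
  moreover have "sign_shift s 0 x \<in> simplex_shell 1 (1 + \<epsilon>)"
    using x_norms by (simp add: mem_simplex_shell sign_shift_def s_x)
  ultimately show "x \<in> (\<Union>\<sigma>\<in>positive_signs a. sign_shift (of_int_vec \<sigma>) 0 -` simplex_shell 1 (1 + \<epsilon>))"
    by (auto simp: s_def)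
qed

lemma orthant_shells_subset_l1_shell:
  fixes a :: "int^'n"
  assumes a: "\<forall>i. 0 \<le> a $ i" and "0 \<le> \<delta>" "\<epsilon> \<le> \<delta>"
  defines "b \<equiv> 1 - \<delta> * (\<Sum>i\<in>UNIV. real_of_int (a $ i))"
  shows "(\<Union>\<sigma>\<in>positive_signs a. sign_shift (of_int_vec \<sigma>) (\<chi> i. - (\<delta> * real_of_int (a $ i))) -` simplex_shell b (b + \<epsilon>))
           \<subseteq> l1ball (\<chi> i. \<delta> * real_of_int (a $ i)) 1 \<inter> l1ball 0 (1 + \<epsilon>) - l1ball 0 1"
proof safe
  fix \<sigma> and x :: "real^'n"
  assume \<sigma>: "\<sigma> \<in> positive_signs a"
    and x: "sign_shift (of_int_vec \<sigma>) (\<chi> i. - (\<delta> * real_of_int (a $ i))) x \<in> simplex_shell b (b + \<epsilon>)"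
  define s where "s = of_int_vec \<sigma>"
  define y where "y = (\<chi> i. s $ i * x $ i - \<delta> * real_of_int (a $ i))"
  define d where "d i = \<delta> * real_of_int (a $ i)" for i
  have s: "s $ i = 1 \<or> s $ i = -1" for i
    using \<sigma> positive_signs_subset of_int_vec_sign unfolding s_def by blast
  have d: "0 \<le> d i" for i
    using a assms(2) by (simp add: d_def)
  have y: "\<forall>i. 0 \<le> y $ i" "b < (\<Sum>i\<in>UNIV. y $ i)" "(\<Sum>i\<in>UNIV. y $ i) \<le> b + \<epsilon>"
    using x by (simp_all add: mem_simplex_shell sign_shift_def y_def s_def)
  have abs_x: "\<bar>x $ i\<bar> = y $ i + d i" for i
    using s[of i] y(1)[rule_format, of i] d[of i] by (auto simp: y_def d_def)
  have abs_x_d: "\<bar>x $ i - d i\<bar> = \<bar>x $ i\<bar> - s $ i * d i" for i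
    using s[of i] y(1)[rule_format, of i] d[of i] by (auto simp: y_def d_def)
  have norm_x: "(\<Sum>i\<in>UNIV. \<bar>x $ i\<bar>) = (\<Sum>i\<in>UNIV. y $ i) + (1 - b)"
    by (simp add: abs_x sum.distrib b_def d_def sum_distrib_left)
  \<comment> \<open>integrality: a positive integer sum is at least one\<close>
  have "1 \<le> (\<Sum>i\<in>UNIV. \<sigma> $ i * a $ i)"
    using \<sigma> by (simp add: positive_signs_def)
  then have "1 \<le> (\<Sum>i\<in>UNIV. s $ i * real_of_int (a $ i))"
    by (simp add: s_def of_int_vec_def flip: of_int_sum of_int_mult)
  then have "\<delta> * 1 \<le> \<delta> * (\<Sum>i\<in>UNIV. s $ i * real_of_int (a $ i))"
    using assms(2) by (rule mult_left_mono)
  then have "\<delta> \<le> (\<Sum>i\<in>UNIV. s $ i * d i)"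
    by (simp add: d_def sum_distrib_left mult.left_commute)
  moreover have "(\<Sum>i\<in>UNIV. \<bar>x $ i - d i\<bar>) = (\<Sum>i\<in>UNIV. \<bar>x $ i\<bar>) - (\<Sum>i\<in>UNIV. s $ i * d i)"
    by (simp add: abs_x_d sum_subtractf)
  ultimately show "x \<in> l1ball (\<chi> i. \<delta> * real_of_int (a $ i)) 1" "x \<in> l1ball 0 (1 + \<epsilon>)"
    using norm_x y assms(3) by (simp_all add: l1ball_def d_def)
  show "x \<in> l1ball 0 1 \<Longrightarrow> False"
    using norm_x y by (simp add: l1ball_def)
qed

lemma disjoint_orthant_shells:
  fixes a :: "int^'n"
  assumes a: "\<forall>i. 0 < a $ i" and "0 < \<delta>"
  shows "disjoint_family_on
           (\<lambda>\<sigma>. sign_shift (of_int_vec \<sigma>) (\<chi> i. - (\<delta> * real_of_int (a $ i))) -` simplex_shell r1 r2)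
           sign_vectors"
  unfolding disjoint_family_on_def
proof (intro ballI impI)
  fix \<sigma> \<tau> :: "int^'n"
  assume \<sigma>: "\<sigma> \<in> sign_vectors" and \<tau>: "\<tau> \<in> sign_vectors" and "\<sigma> \<noteq> \<tau>"
  then obtain i where "\<sigma> $ i \<noteq> \<tau> $ i"
    by (meson vec_eq_iff)
  then have opposite: "of_int_vec \<tau> $ i = - of_int_vec \<sigma> $ i"
    using of_int_vec_sign[OF \<sigma>, of i] of_int_vec_sign[OF \<tau>, of i] by (auto simp: of_int_vec_def)
  have "0 < \<delta> * real_of_int (a $ i)"
    using assms by simp
  \<comment> \<open>in the i-th coordinate the two shells lie on opposite sides of 0\<close>
  then have "\<not> (\<delta> * real_of_int (a $ i) \<le> of_int_vec \<sigma> $ i * x $ i \<and>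
                \<delta> * real_of_int (a $ i) \<le> of_int_vec \<tau> $ i * x $ i)" for x :: "real^'n"
    unfolding opposite by linarith
  then show "sign_shift (of_int_vec \<sigma>) (\<chi> i. - (\<delta> * real_of_int (a $ i))) -` simplex_shell r1 r2 \<inter>
             sign_shift (of_int_vec \<tau>) (\<chi> i. - (\<delta> * real_of_int (a $ i))) -` simplex_shell r1 r2 = {}"
    by (force simp: mem_simplex_shell sign_shift_def)
qed

lemma measure_reflected_simplex_shell:
  fixes \<sigma> :: "int^'n" and t :: "real^'n"
  assumes "\<sigma> \<in> sign_vectors" "0 \<le> r1" "r1 \<le> r2"
  shows "sign_shift (of_int_vec \<sigma>) t -` simplex_shell r1 r2 \<in> fmeasurable lborel"
    and "measure lborel (sign_shift (of_int_vec \<sigma>) t -` simplex_shell r1 r2) =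
           (r2 ^ CARD('n) - r1 ^ CARD('n)) / fact CARD('n)"
  using measure_sign_shift_vimage[OF abs_of_int_vec_sign[OF assms(1)] fmeasurable_simplex_shell] assms
  by (simp_all add: measure_simplex_shell)

lemma l1_shell_sets: "l1ball c r \<inter> l1ball 0 (1 + \<epsilon>) - l1ball 0 1 \<in> sets borel"
  using closed_l1ball by (intro sets.Diff sets.Int borel_closed)

lemma measure_l1_shell_upper:
  fixes a :: "int^'n"
  assumes "0 \<le> \<delta>" "0 \<le> \<epsilon>"
  defines "S \<equiv> l1ball (\<chi> i. \<delta> * real_of_int (a $ i)) 1 \<inter> l1ball 0 (1 + \<epsilon>) - l1ball 0 1"
  shows "S \<in> fmeasurable lborel"
    and "measure lebesgue S \<le> card (positive_signs a) * (((1 + \<epsilon>) ^ CARD('n) - 1) / fact CARD('n))"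
proof -
  define G where "G = positive_signs a"
  define U :: "int^'n \<Rightarrow> (real^'n) set"
    where "U \<sigma> = sign_shift (of_int_vec \<sigma>) 0 -` simplex_shell 1 (1 + \<epsilon>)" for \<sigma>
  have G: "finite G" "G \<subseteq> sign_vectors"
    using finite_subset[OF positive_signs_subset finite_sign_vectors] positive_signs_subset
    by (auto simp: G_def)
  have U: "U \<sigma> \<in> fmeasurable lborel" "measure lborel (U \<sigma>) = ((1 + \<epsilon>) ^ CARD('n) - 1) / fact CARD('n)"
    if "\<sigma> \<in> G" for \<sigma>
    using measure_reflected_simplex_shell[of \<sigma> 1 "1 + \<epsilon>"] that G assms(2) by (auto simp: U_def)
  have "S \<subseteq> (\<Union>\<sigma>\<in>G. U \<sigma>)"
    using l1_shell_subset_orthant_shells[OF assms(1), of a \<epsilon>] by (simp add: S_def G_def U_def)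
  moreover have "(\<Union>\<sigma>\<in>G. U \<sigma>) \<in> fmeasurable lborel"
    using G U by (intro fmeasurable.finite_UN) auto
  moreover have S_sets: "S \<in> sets lborel"
    unfolding S_def sets_lborel by (rule l1_shell_sets)
  ultimately have S: "S \<in> fmeasurable lborel" "measure lborel S \<le> measure lborel (\<Union>\<sigma>\<in>G. U \<sigma>)"
    by (auto intro: fmeasurableI2 measure_mono_fmeasurable)
  then show "S \<in> fmeasurable lborel"
    by simp
  have "measure lebesgue S = measure lborel S"
    using S_sets by simp
  also note S(2)
  also have "measure lborel (\<Union>\<sigma>\<in>G. U \<sigma>) \<le> (\<Sum>\<sigma>\<in>G. measure lborel (U \<sigma>))"
    using G U by (intro measure_UNION_le) (auto simp: fmeasurable_def)
  also have "\<dots> = card (positive_signs a) * (((1 + \<epsilon>) ^ CARD('n) - 1) / fact CARD('n))"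
    using U by (simp add: G_def)
  finally show "measure lebesgue S \<le> card (positive_signs a) * (((1 + \<epsilon>) ^ CARD('n) - 1) / fact CARD('n))" .
qed

lemma measure_l1_shell_lower:
  fixes a :: "int^'n"
  assumes a: "\<forall>i. 0 < a $ i" and \<epsilon>: "0 < \<epsilon>" "\<epsilon> \<le> \<delta>"
    and \<delta>: "\<delta> * (\<Sum>i\<in>UNIV. real_of_int (a $ i)) \<le> 1"
  defines "S \<equiv> l1ball (\<chi> i. \<delta> * real_of_int (a $ i)) 1 \<inter> l1ball 0 (1 + \<epsilon>) - l1ball 0 1"
    and "b \<equiv> 1 - \<delta> * (\<Sum>i\<in>UNIV. real_of_int (a $ i))"
  shows "card (positive_signs a) * (((b + \<epsilon>) ^ CARD('n) - b ^ CARD('n)) / fact CARD('n))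
           \<le> measure lebesgue S"
proof -
  define G where "G = positive_signs a"
  define T :: "int^'n \<Rightarrow> (real^'n) set"
    where "T \<sigma> = sign_shift (of_int_vec \<sigma>) (\<chi> i. - (\<delta> * real_of_int (a $ i))) -` simplex_shell b (b + \<epsilon>)"
    for \<sigma>
  have G: "finite G" "G \<subseteq> sign_vectors"
    using finite_subset[OF positive_signs_subset finite_sign_vectors] positive_signs_subset
    by (auto simp: G_def)
  have T: "T \<sigma> \<in> fmeasurable lborel"
    "measure lborel (T \<sigma>) = ((b + \<epsilon>) ^ CARD('n) - b ^ CARD('n)) / fact CARD('n)" if "\<sigma> \<in> G" for \<sigma>
    using measure_reflected_simplex_shell[of \<sigma> b "b + \<epsilon>"] that G \<epsilon> \<delta> by (auto simp: T_def b_def)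
  have "card G * (((b + \<epsilon>) ^ CARD('n) - b ^ CARD('n)) / fact CARD('n)) = (\<Sum>\<sigma>\<in>G. measure lborel (T \<sigma>))"
    using T by simp
  also have "\<dots> = measure lborel (\<Union>\<sigma>\<in>G. T \<sigma>)"
    using G T disjoint_family_on_mono[OF G(2) disjoint_orthant_shells[of a \<delta>]] a \<epsilon>
    by (intro measure_finite_Union[symmetric]) (auto simp: T_def fmeasurable_def less_top[symmetric])
  also have "\<dots> \<le> measure lborel S"
  proof (rule measure_mono_fmeasurable)
    show "(\<Union>\<sigma>\<in>G. T \<sigma>) \<subseteq> S"
      using orthant_shells_subset_l1_shell[of a \<delta> \<epsilon>] a \<epsilon>
      by (simp add: S_def T_def G_def b_def order_less_imp_le)
    show "(\<Union>\<sigma>\<in>G. T \<sigma>) \<in> sets lborel"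
      using G T by (intro fmeasurable.finite_UN[THEN fmeasurableD]) auto
    show "S \<in> fmeasurable lborel"
      using measure_l1_shell_upper(1)[of \<delta> \<epsilon> a] \<epsilon> by (simp add: S_def)
  qed
  also have "\<dots> = measure lebesgue S"
    using l1_shell_sets[of "\<chi> i. \<delta> * real_of_int (a $ i)" 1 \<epsilon>, folded sets_lborel S_def] by simp
  finally show ?thesis
    by (simp add: G_def)
qed

lemma power_diff_bounds:
  fixes x y :: real
  assumes "0 \<le> y" "y \<le> x"
  shows "x ^ n - y ^ n \<le> (x - y) * real n * x ^ (n - 1)"
    and "(x - y) * real n * y ^ (n - 1) \<le> x ^ n - y ^ n"
proof -
  have diff: "x ^ n - y ^ n = (x - y) * (\<Sum>i<n. y ^ (n - Suc i) * x ^ i)"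
    by (rule power_diff_sumr2)
  have up: "y ^ (n - Suc i) * x ^ i \<le> x ^ (n - 1)" if "i < n" for i
  proof -
    have "y ^ (n - Suc i) * x ^ i \<le> x ^ (n - Suc i) * x ^ i"
      using assms by (intro mult_right_mono power_mono) auto
    also have "\<dots> = x ^ (n - 1)"
      using that by (simp flip: power_add)
    finally show ?thesis .
  qed
  have upper: "(\<Sum>i<n. y ^ (n - Suc i) * x ^ i) \<le> real n * x ^ (n - 1)"
    using sum_mono[of "{..<n}", OF up] by simp
  have lo: "y ^ (n - 1) \<le> y ^ (n - Suc i) * x ^ i" if "i < n" for i
  proof -
    have "y ^ (n - 1) = y ^ (n - Suc i) * y ^ i"
      using that by (simp flip: power_add)
    also have "\<dots> \<le> y ^ (n - Suc i) * x ^ i"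
      using assms by (intro mult_left_mono power_mono) auto
    finally show ?thesis .
  qed
  have lower: "real n * y ^ (n - 1) \<le> (\<Sum>i<n. y ^ (n - Suc i) * x ^ i)"
    using sum_mono[of "{..<n}", OF lo] by simp
  have "0 \<le> x - y"
    using assms by simp
  then show "x ^ n - y ^ n \<le> (x - y) * real n * x ^ (n - 1)"
    and "(x - y) * real n * y ^ (n - 1) \<le> x ^ n - y ^ n"
    unfolding diff mult.assoc using upper lower by (simp_all add: mult_left_mono)
qed

lemma one_plus_power_le:
  fixes x :: real
  assumes "0 \<le> x" "2 * real m * x \<le> 1"
  shows "(1 + x) ^ m \<le> 1 + 2 * real m * x"
  using assms(2)
proof (induction m)
  case 0
  then show ?case by simp
next
  case (Suc m)
  have small: "2 * real m * x \<le> 1"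
    using Suc.prems assms(1) by (smt (verit) mult_right_mono of_nat_Suc)
  have "(1 + x) ^ Suc m = (1 + x) * (1 + x) ^ m"
    by simp
  also have "\<dots> \<le> (1 + x) * (1 + 2 * real m * x)"
    using Suc.IH[OF small] assms(1) by (intro mult_left_mono) auto
  also have "\<dots> = 1 + x + 2 * real m * x + (2 * real m * x) * x"
    by (simp add: algebra_simps)
  also have "\<dots> \<le> 1 + x + 2 * real m * x + x"
    using small assms(1) by (simp add: mult_left_le_one_le)
  also have "\<dots> = 1 + 2 * real (Suc m) * x"
    by (simp add: algebra_simps)
  finally show ?case .
qed

lemma power_increment_upper:
  fixes \<epsilon> :: real
  assumes "0 \<le> \<epsilon>" "2 * real (n - 1) * \<epsilon> \<le> 1"
  shows "(1 + \<epsilon>) ^ n - 1 \<le> real n * \<epsilon> * (1 + 2 * real (n - 1) * \<epsilon>)"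
proof -
  have "(1 + \<epsilon>) ^ n - 1 \<le> \<epsilon> * real n * (1 + \<epsilon>) ^ (n - 1)"
    using power_diff_bounds(1)[of 1 "1 + \<epsilon>" n] assms(1) by simp
  also have "\<dots> \<le> \<epsilon> * real n * (1 + 2 * real (n - 1) * \<epsilon>)"
    using one_plus_power_le[OF assms] assms(1) by (intro mult_left_mono) auto
  finally show ?thesis
    by (simp add: mult_ac)
qed

lemma power_increment_lower:
  fixes c \<epsilon> :: real
  assumes "0 \<le> c" "c \<le> 1" "0 \<le> \<epsilon>"
  shows "real n * \<epsilon> * (1 - real (n - 1) * c) \<le> (1 - c + \<epsilon>) ^ n - (1 - c) ^ n"
proof -
  have "1 - real (n - 1) * c \<le> (1 - c) ^ (n - 1)"
    using Bernoulli_inequality[of "- c" "n - 1"] assms by simp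
  then have "\<epsilon> * real n * (1 - real (n - 1) * c) \<le> \<epsilon> * real n * (1 - c) ^ (n - 1)"
    using assms(3) by (intro mult_left_mono) auto
  also have "\<dots> \<le> (1 - c + \<epsilon>) ^ n - (1 - c) ^ n"
    using power_diff_bounds(2)[of "1 - c" "1 - c + \<epsilon>" n] assms by simp
  finally show ?thesis
    by (simp add: mult_ac)
qed

lemma round_eq_of_power_increment_bounds:
  fixes m \<epsilon> c :: real and N n :: nat
  assumes n: "1 \<le> n" and N_le: "N \<le> 2 ^ n" and \<epsilon>: "0 < \<epsilon>" "\<epsilon> \<le> c"
    and small: "real n * 2 ^ n * c < 1 / 10"
    and lower: "real N * (((1 - c + \<epsilon>) ^ n - (1 - c) ^ n) / fact n) \<le> m"
    and upper: "m \<le> real N * (((1 + \<epsilon>) ^ n - 1) / fact n)"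
  shows "round (fact (n - 1) / \<epsilon> * m) = int N"
proof -
  have "1 * c \<le> real n * c" "real n * c \<le> real n * 2 ^ n * c" "real N * real n * c \<le> 2 ^ n * real n * c"
    using n N_le \<epsilon> by (intro mult_right_mono; simp add: mult_right_mono)+
  then have c: "c \<le> 1" "2 * real n * c \<le> 1" and N: "4 * real N * real n * c < 1"
    using small by (simp_all add: mult_ac)
  have scale: "fact (n - 1) / \<epsilon> * (real N * (z / fact n)) = real N * (z / (real n * \<epsilon>))" for z
    using n \<epsilon> by (simp add: fact_reduce[of n] field_simps)
  have n\<epsilon>: "0 < real n * \<epsilon>"
    using n \<epsilon> by simp
  have Nnc: "real N * (real (n - 1) * c) \<le> real N * real n * c"
    unfolding mult.assoc using \<epsilon> by (intro mult_left_mono mult_right_mono) auto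
  have "fact (n - 1) / \<epsilon> * m \<le> fact (n - 1) / \<epsilon> * (real N * (((1 + \<epsilon>) ^ n - 1) / fact n))"
    using upper \<epsilon> by (intro mult_left_mono) auto
  also have "\<dots> = real N * (((1 + \<epsilon>) ^ n - 1) / (real n * \<epsilon>))"
    by (rule scale)
  also have "\<dots> \<le> real N * (1 + 2 * real (n - 1) * \<epsilon>)"
  proof -
    have "2 * real (n - 1) * \<epsilon> \<le> 2 * real n * c"
      using \<epsilon> by (intro mult_mono) auto
    then have "(1 + \<epsilon>) ^ n - 1 \<le> real n * \<epsilon> * (1 + 2 * real (n - 1) * \<epsilon>)"
      using \<epsilon> c by (intro power_increment_upper) auto
    then show ?thesis
      using n\<epsilon> by (intro mult_left_mono) (simp_all add: divide_le_eq mult.commute)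
  qed
  also have "\<dots> \<le> real N * (1 + 2 * real (n - 1) * c)"
    using \<epsilon> by (intro mult_left_mono add_left_mono) auto
  finally have below: "fact (n - 1) / \<epsilon> * m < real N + 1 / 2"
    using N Nnc by (simp add: algebra_simps)
  have "real N * (1 - real (n - 1) * c) \<le> real N * (((1 - c + \<epsilon>) ^ n - (1 - c) ^ n) / (real n * \<epsilon>))"
    using power_increment_lower[of c \<epsilon> n] \<epsilon> c n\<epsilon>
    by (intro mult_left_mono) (simp_all add: le_divide_eq mult.commute)
  also have "\<dots> = fact (n - 1) / \<epsilon> * (real N * (((1 - c + \<epsilon>) ^ n - (1 - c) ^ n) / fact n))"
    by (rule scale[symmetric])
  also have "\<dots> \<le> fact (n - 1) / \<epsilon> * m"
    using lower \<epsilon> by (intro mult_left_mono) auto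
  finally have above: "real N - 1 / 2 < fact (n - 1) / \<epsilon> * m"
    using N Nnc by (simp add: algebra_simps)
  have "\<bar>fact (n - 1) / \<epsilon> * m - real N\<bar> < 1 / 2"
    using below above by (simp only: abs_less_iff) linarith
  then show ?thesis
    by (intro round_unique') simp
qed

theorem mainTheorem20:
  fixes a :: "int^'n" and \<epsilon> \<delta> :: real
  assumes apos: "\<forall>i. a $ i > 0"
    and eps: "0 < \<epsilon>" and epsdel: "\<epsilon> < \<delta>"
    and del: "\<delta> < (1/10) / (real CARD('n) * 2 ^ CARD('n) * (\<Sum>i\<in>UNIV. real_of_int \<bar>a $ i\<bar>))"
  shows "round (fact (CARD('n) - 1) / \<epsilon> *
            measure lebesgue
              ((l1ball (\<chi> i. \<delta> * real_of_int (a $ i)) 1 \<inter> l1ball 0 (1 + \<epsilon>)) - l1ball 0 1))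
         = int (card {\<sigma> :: int^'n. (\<forall>i. \<sigma> $ i \<in> {-1, 1}) \<and> (\<Sum>i\<in>UNIV. \<sigma> $ i * a $ i) > 0})"
proof -
  define n where "n = CARD('n)"
  define A where "A = (\<Sum>i\<in>UNIV. real_of_int (a $ i))"
  define c where "c = \<delta> * A"
  have n: "1 \<le> n"
    by (simp add: n_def Suc_le_eq)
  have "real n \<le> A"
    using sum_mono[of UNIV "\<lambda>_. 1" "\<lambda>i. real_of_int (a $ i)"] apos
    by (simp add: A_def n_def int_one_le_iff_zero_less)
  with n have A: "1 \<le> A"
    by linarith
  have "(\<Sum>i\<in>UNIV. real_of_int \<bar>a $ i\<bar>) = A"
    unfolding A_def using apos by (intro sum.cong) (auto simp: less_imp_le)
  then have small: "real n * 2 ^ n * c < 1 / 10"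
    using del n A by (simp add: c_def n_def pos_less_divide_eq mult_ac)
  have "\<delta> * 1 \<le> \<delta> * A"
    using A eps epsdel by (intro mult_left_mono) auto
  then have "\<epsilon> \<le> c"
    unfolding c_def using epsdel by linarith
  moreover have "1 * c \<le> real n * 2 ^ n * c"
    using n \<open>\<epsilon> \<le> c\<close> eps by (intro mult_right_mono mult_ge1_I) auto
  then have "\<delta> * A \<le> 1"
    using small by (simp add: c_def)
  ultimately show ?thesis
    using measure_l1_shell_lower[OF apos eps less_imp_le[OF epsdel]] measure_l1_shell_upper(2)[of \<delta> \<epsilon> a]
      card_positive_signs_le[of a] n eps epsdel small
    by (intro round_eq_of_power_increment_bounds) (simp_all add: c_def A_def n_def positive_signs_def)
qed

end
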